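(* Let $G=(V,E)$ be a connected graph and $\ell$ an $s$-cyclic labeling of $G$ (for some integer $s\ge 3$). Then either $G$ is acyclic or $G$ contains a unique cycle, whose length $k$ is divisible by $s$. Further, if $G$ contains a cycle $C$, then $C$ is an oriented (directed) cycle in the orientation induced by $\ell$, and all oriented paths in $G$ are oriented away from the vertices of $C$.
   Context: For $L=\{0,1,\dots,s-1\}$ with $s\ge 3$, a function $\ell:V\to L$ is an $s$-cyclic labeling of $G$ if every $v\in V$ has at most one neighbor $P(v)$ (the parent of $v$) with $\ell(P(v))\equiv \ell(v)-1 \pmod s$, and all other neighbors $w$ of $v$ satisfy $\ell(w)\equiv\ell(v)+1\pmod s$. The orientation induced by $\ell$ orients each edge $\{u,v\}$ as $(u,v)$ when $u=P(v)$, i.e. away from the parent. *)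

theory Defs
  imports Main
begin

definition simple_graph :: "'a set \<Rightarrow> 'a set set \<Rightarrow> bool" where
  "simple_graph V E \<longleftrightarrow> (\<forall>e\<in>E. \<exists>u v. e = {u, v} \<and> u \<in> V \<and> v \<in> V \<and> u \<noteq> v)"

definition adj :: "'a set set \<Rightarrow> 'a \<Rightarrow> 'a \<Rightarrow> bool" where
  "adj E u v \<longleftrightarrow> {u, v} \<in> E"

definition connected_graph :: "'a set \<Rightarrow> 'a set set \<Rightarrow> bool" where
  "connected_graph V E \<longleftrightarrow> (\<forall>u\<in>V. \<forall>v\<in>V. (adj E)\<^sup>*\<^sup>* u v)"

definition is_cycle :: "'a set \<Rightarrow> 'a set set \<Rightarrow> 'a list \<Rightarrow> bool" where
  "is_cycle V E xs \<longleftrightarrow> length xs \<ge> 3 \<and> distinct xs \<and> set xs \<subseteq> V \<and>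
     (\<forall>i < length xs. adj E (xs ! i) (xs ! ((i + 1) mod length xs)))"

text \<open>The edge set of a cycle (identifies a cycle as a subgraph, independent of
  starting point and direction of traversal).\<close>
definition cycle_edges :: "'a list \<Rightarrow> 'a set set" where
  "cycle_edges xs = {{xs ! i, xs ! ((i + 1) mod length xs)} | i. i < length xs}"

definition acyclic_graph :: "'a set \<Rightarrow> 'a set set \<Rightarrow> bool" where
  "acyclic_graph V E \<longleftrightarrow> \<not> (\<exists>xs. is_cycle V E xs)"

definition parent_label :: "nat \<Rightarrow> ('a \<Rightarrow> nat) \<Rightarrow> 'a \<Rightarrow> 'a \<Rightarrow> bool" where
  "parent_label s l u v \<longleftrightarrow> (int (l u)) mod (int s) = (int (l v) - 1) mod (int s)"

definition cyclic_labeling :: "nat \<Rightarrow> 'a set \<Rightarrow> 'a set set \<Rightarrow> ('a \<Rightarrow> nat) \<Rightarrow> bool" where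
  "cyclic_labeling s V E l \<longleftrightarrow>
     (\<forall>v\<in>V. l v < s) \<and>
     (\<forall>v\<in>V. \<forall>u u'. adj E u v \<and> parent_label s l u v \<and> adj E u' v \<and> parent_label s l u' v
                  \<longrightarrow> u = u') \<and>
     (\<forall>v\<in>V. \<forall>w. adj E v w \<and> \<not> parent_label s l w v \<longrightarrow> (int (l w)) mod (int s) = (int (l v) + 1) mod (int s))"

text \<open>Induced orientation: the edge {u,v} is oriented (u,v) iff u = P(v).\<close>
definition arc :: "nat \<Rightarrow> 'a set set \<Rightarrow> ('a \<Rightarrow> nat) \<Rightarrow> 'a \<Rightarrow> 'a \<Rightarrow> bool" where
  "arc s E l u v \<longleftrightarrow> adj E u v \<and> parent_label s l u v"

definition oriented_cycle :: "nat \<Rightarrow> 'a set set \<Rightarrow> ('a \<Rightarrow> nat) \<Rightarrow> 'a list \<Rightarrow> bool" where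
  "oriented_cycle s E l xs \<longleftrightarrow>
     (\<forall>i < length xs. arc s E l (xs ! i) (xs ! ((i + 1) mod length xs))) \<or>
     (\<forall>i < length xs. arc s E l (xs ! ((i + 1) mod length xs)) (xs ! i))"

definition is_path :: "'a set \<Rightarrow> 'a set set \<Rightarrow> 'a list \<Rightarrow> bool" where
  "is_path V E ps \<longleftrightarrow> ps \<noteq> [] \<and> distinct ps \<and> set ps \<subseteq> V \<and>
     (\<forall>i. i + 1 < length ps \<longrightarrow> adj E (ps ! i) (ps ! (i + 1)))"

end

theory Submission
  imports Defs
begin

text \<open>Every edge is oriented, and the orientation gives each vertex at most one in-neighbour.
  Following the orientation around a cycle, a vertex entered from its parent must leave through
  its other cycle edge, so every cycle is a directed cycle; the labels then increase by one (or
  decrease by one) at each step, so the length is a multiple of \<open>s\<close>. A directed cycle is closed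
  under taking parents, hence under taking arc-ancestors. In a connected graph every vertex is an
  arc-descendant of a given cycle: walking along an edge against its orientation from outside the
  cycle only steps back to the unique parent. So any second cycle meets the first, contains only
  arc-ancestors of a common vertex, and has the same vertex set; the edges of a cycle are exactly
  the edges to the parents of its vertices, so the edge sets coincide as well.\<close>

lemma cyclic_propagate:
  fixes k :: nat
  assumes step: "\<And>i. i < k \<Longrightarrow> P i \<Longrightarrow> P ((i + 1) mod k)"
    and "P i" "i < k" "j < k"
  shows "P j"
proof -
  have "P ((i + m) mod k)" for m
  proof (induction m)
    case 0
    then show ?case using \<open>P i\<close> \<open>i < k\<close> by simp
  next
    case (Suc m)
    have "(i + Suc m) mod k = ((i + m) mod k + 1) mod k"
      by (simp add: mod_simps)
    then show ?case using step[OF _ Suc] \<open>i < k\<close> by simp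
  qed
  moreover have "(i + (k - i + j)) mod k = j"
    using \<open>i < k\<close> \<open>j < k\<close> by simp
  ultimately show ?thesis by metis
qed

lemma rtranclp_around_cycle:
  fixes f :: "nat \<Rightarrow> 'a"
  assumes "\<And>i. i < k \<Longrightarrow> R (f i) (f ((i + 1) mod k))" "i < k" "j < k"
  shows "R\<^sup>*\<^sup>* (f i) (f j)"
proof (rule cyclic_propagate[where P = "\<lambda>j. R\<^sup>*\<^sup>* (f i) (f j)" and i = i])
  fix j
  assume "j < k" "R\<^sup>*\<^sup>* (f i) (f j)"
  then show "R\<^sup>*\<^sup>* (f i) (f ((j + 1) mod k))"
    using assms(1) by (simp add: rtranclp.rtrancl_into_rtrancl)
qed (use assms in auto)

lemma dvd_cyclic_increments:
  fixes h :: "nat \<Rightarrow> int"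
  assumes "k > 0" and step: "\<And>i. i < k \<Longrightarrow> m dvd h ((i + 1) mod k) - h i - d"
  shows "m dvd int k * d"
proof -
  have "m dvd h (j mod k) - h 0 - int j * d" for j
  proof (induction j)
    case (Suc j)
    have "m dvd h ((j mod k + 1) mod k) - h (j mod k) - d"
      using step \<open>k > 0\<close> by simp
    from dvd_add[OF this Suc] show ?case
      by (simp add: mod_simps algebra_simps)
  qed simp
  from this[of k] show ?thesis by simp
qed

lemma mod_add_two_neq:
  fixes k :: nat
  assumes "k \<ge> 3" "i < k"
  shows "((i + 1) mod k + 1) mod k \<noteq> i"
proof
  assume "((i + 1) mod k + 1) mod k = i"
  then have "i mod k = (i + 2) mod k"
    using \<open>i < k\<close> by (simp add: mod_simps)
  then have "k dvd (i + 2) - i"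
    using mod_eq_dvd_iff_nat[of i "i + 2" k] by simp
  then have "k \<le> 2"
    by (simp add: dvd_imp_le)
  with \<open>k \<ge> 3\<close> show False by simp
qed

lemma adj_commute: "adj E u v \<longleftrightarrow> adj E v u"
  by (simp add: adj_def insert_commute)

lemma adj_in_vertices:
  "simple_graph V E \<Longrightarrow> adj E u v \<Longrightarrow> u \<in> V \<and> v \<in> V"
  unfolding simple_graph_def adj_def by (auto simp: doubleton_eq_iff)

lemma parent_label_iff_dvd:
  "parent_label s l u v \<longleftrightarrow> int s dvd int (l v) - int (l u) - 1"
proof -
  have "int (l u) - (int (l v) - 1) = - (int (l v) - int (l u) - 1)"
    by simp
  then show ?thesis
    unfolding parent_label_def mod_eq_dvd_iff by (simp only: dvd_minus_iff)
qed

lemma cycle_edges_subset: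
  assumes "e \<in> cycle_edges C"
  shows "e \<subseteq> set C"
proof -
  obtain i where "i < length C" "e = {C ! i, C ! ((i + 1) mod length C)}"
    using assms unfolding cycle_edges_def by blast
  moreover from this have "C \<noteq> []" by auto
  ultimately show ?thesis by simp
qed

locale cyclic_labeled_graph =
  fixes V :: "'a set" and E :: "'a set set" and s :: nat and l :: "'a \<Rightarrow> nat"
  assumes simple: "simple_graph V E"
    and labeling: "cyclic_labeling s V E l"
begin

lemma arc_or_arc_converse:
  assumes "adj E u v"
  shows "arc s E l u v \<or> arc s E l v u"
proof (cases "parent_label s l u v")
  case False
  have "v \<in> V" "adj E v u"
    using adj_in_vertices[OF simple assms] assms adj_commute[of E u v] by auto
  then have "int (l u) mod int s = (int (l v) + 1) mod int s"
    using labeling False unfolding cyclic_labeling_def by blast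
  then have "parent_label s l v u"
    unfolding parent_label_iff_dvd mod_eq_dvd_iff by (simp add: algebra_simps)
  then show ?thesis using \<open>adj E v u\<close> by (simp add: arc_def)
qed (use assms in \<open>simp add: arc_def\<close>)

lemma arc_parent_unique:
  assumes "arc s E l u v" "arc s E l u' v"
  shows "u = u'"
proof -
  have "v \<in> V"
    using assms adj_in_vertices[OF simple] unfolding arc_def by blast
  then show ?thesis
    using labeling assms unfolding cyclic_labeling_def arc_def by blast
qed

lemma cycle_oriented:
  assumes C: "is_cycle V E C"
  shows "oriented_cycle s E l C"
proof -
  define k where "k = length C"
  have k: "k \<ge> 3" and "distinct C" and adj: "\<And>i. i < k \<Longrightarrow> adj E (C ! i) (C ! ((i + 1) mod k))"
    using C unfolding is_cycle_def k_def by auto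
  define forward where "forward i \<longleftrightarrow> arc s E l (C ! i) (C ! ((i + 1) mod k))" for i
  have forward_step: "forward ((i + 1) mod k)" if "i < k" "forward i" for i
  proof -
    let ?j = "(i + 1) mod k" and ?j' = "((i + 1) mod k + 1) mod k"
    have "?j < k" "?j' < k" using k by auto
    \<comment> \<open>the parent of \<open>C ! ?j\<close> is \<open>C ! i\<close>, which differs from its other cycle neighbour\<close>
    have "C ! ?j' \<noteq> C ! i"
      using \<open>distinct C\<close> \<open>?j' < k\<close> \<open>i < k\<close> mod_add_two_neq[OF k \<open>i < k\<close>]
      by (simp add: nth_eq_iff_index_eq k_def)
    then show ?thesis
      using arc_or_arc_converse[OF adj[OF \<open>?j < k\<close>]] arc_parent_unique that(2)
      unfolding forward_def by blast
  qed
  show ?thesis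
  proof (cases "\<exists>i<k. forward i")
    case True
    then obtain i where "i < k" "forward i" by blast
    then have "\<forall>j<k. forward j"
      using cyclic_propagate[of k forward] forward_step by blast
    then show ?thesis unfolding oriented_cycle_def forward_def k_def by simp
  next
    case False
    then show ?thesis
      using adj arc_or_arc_converse unfolding oriented_cycle_def forward_def k_def by blast
  qed
qed

lemma cycle_vertex_parent:
  assumes C: "is_cycle V E C" and "y \<in> set C"
  obtains p where "arc s E l p y" "{p, y} \<in> cycle_edges C"
proof -
  define k where "k = length C"
  obtain j where j: "j < k" "y = C ! j"
    using \<open>y \<in> set C\<close> unfolding k_def by (metis in_set_conv_nth)
  have "k \<ge> 3" using C unfolding is_cycle_def k_def by auto
  have edge: "{C ! i, C ! ((i + 1) mod k)} \<in> cycle_edges C" if "i < k" for i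
    using that unfolding cycle_edges_def k_def by blast
  consider "\<forall>i<k. arc s E l (C ! i) (C ! ((i + 1) mod k))"
    | "\<forall>i<k. arc s E l (C ! ((i + 1) mod k)) (C ! i)"
    using cycle_oriented[OF C] unfolding oriented_cycle_def k_def by blast
  then show thesis
  proof cases
    case 1
    let ?i = "(j + k - 1) mod k"
    have "?i < k" "(?i + 1) mod k = j"
      using \<open>k \<ge> 3\<close> j by (auto simp: mod_simps)
    then show thesis using that 1 edge[of ?i] j by (metis insert_commute)
  next
    case 2
    then show thesis using that edge[of j] j by (metis insert_commute)
  qed
qed

lemma cycle_contains_parent:
  assumes C: "is_cycle V E C" and "y \<in> set C" "arc s E l w y"
  shows "w \<in> set C"
proof -
  obtain p where "arc s E l p y" "{p, y} \<in> cycle_edges C"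
    using cycle_vertex_parent[OF assms(1,2)] .
  then show ?thesis
    using arc_parent_unique \<open>arc s E l w y\<close> cycle_edges_subset by blast
qed

lemma cycle_contains_ancestors:
  assumes C: "is_cycle V E C" and "(arc s E l)\<^sup>*\<^sup>* w y" "y \<in> set C"
  shows "w \<in> set C"
  using assms(2,3)
  by (induction rule: converse_rtranclp_induct) (auto intro: cycle_contains_parent[OF C])

lemma cycle_strongly_connected:
  assumes C: "is_cycle V E C" and "x \<in> set C" "y \<in> set C"
  shows "(arc s E l)\<^sup>*\<^sup>* x y"
proof -
  define k where "k = length C"
  obtain i j where "i < k" "x = C ! i" "j < k" "y = C ! j"
    using assms(2,3) unfolding k_def by (metis in_set_conv_nth)
  consider "\<And>i. i < k \<Longrightarrow> arc s E l (C ! i) (C ! ((i + 1) mod k))"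
    | "\<And>i. i < k \<Longrightarrow> (arc s E l)\<inverse>\<inverse> (C ! i) (C ! ((i + 1) mod k))"
    using cycle_oriented[OF C] unfolding oriented_cycle_def k_def by auto
  then show ?thesis
  proof cases
    case 1
    from rtranclp_around_cycle[of k "arc s E l" "nth C", OF 1 \<open>i < k\<close> \<open>j < k\<close>] show ?thesis
      using \<open>x = C ! i\<close> \<open>y = C ! j\<close> by simp
  next
    case 2
    from rtranclp_around_cycle[of k "(arc s E l)\<inverse>\<inverse>" "nth C", OF 2 \<open>j < k\<close> \<open>i < k\<close>] show ?thesis
      using \<open>x = C ! i\<close> \<open>y = C ! j\<close> by (simp add: rtranclp_converseD)
  qed
qed

lemma descendant_of_cycle:
  assumes conn: "connected_graph V E" and C: "is_cycle V E C" and "v \<in> V"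
  obtains c where "c \<in> set C" "(arc s E l)\<^sup>*\<^sup>* c v"
proof -
  have "hd C \<in> set C"
    using C unfolding is_cycle_def by (auto intro: hd_in_set)
  then have "hd C \<in> V" using C unfolding is_cycle_def by auto
  then have "(adj E)\<^sup>*\<^sup>* (hd C) v"
    using conn \<open>v \<in> V\<close> unfolding connected_graph_def by blast
  then have "\<exists>c\<in>set C. (arc s E l)\<^sup>*\<^sup>* c v"
  proof (induction rule: rtranclp_induct)
    case base
    then show ?case using \<open>hd C \<in> set C\<close> by blast
  next
    case (step u v)
    then obtain c where c: "c \<in> set C" "(arc s E l)\<^sup>*\<^sup>* c u" by blast
    from arc_or_arc_converse[OF step(2)] show ?case
    proof
      assume "arc s E l u v"
      then show ?thesis using c by (meson rtranclp.rtrancl_into_rtrancl)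
    next
      assume reverse: "arc s E l v u"
      show ?thesis
      proof (cases "u \<in> set C")
        case True
        then show ?thesis using cycle_contains_parent[OF C True reverse] by blast
      next
        case False
        \<comment> \<open>the path from \<open>c\<close> enters \<open>u\<close> through its unique parent, which is \<open>v\<close>\<close>
        then obtain w where "(arc s E l)\<^sup>*\<^sup>* c w" "arc s E l w u"
          using c by (metis rtranclp.cases)
        then show ?thesis using arc_parent_unique reverse c by blast
      qed
    qed
  qed
  then show thesis using that by blast
qed

lemma cycle_vertex_set_subset:
  assumes conn: "connected_graph V E" and C: "is_cycle V E C" and C': "is_cycle V E C'"
  shows "set C' \<subseteq> set C"
proof -
  have "hd C' \<in> set C'"
    using C' unfolding is_cycle_def by (auto intro: hd_in_set)
  moreover have "hd C' \<in> V" using calculation C' unfolding is_cycle_def by auto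
  ultimately obtain c where "c \<in> set C" "c \<in> set C'"
    using descendant_of_cycle[OF conn C] cycle_contains_ancestors[OF C'] by metis
  then show ?thesis
    using cycle_strongly_connected[OF C'] cycle_contains_ancestors[OF C] by blast
qed

lemma cycle_edges_eq_parent_edges:
  assumes C: "is_cycle V E C"
  shows "cycle_edges C = {{p, y} | p y. y \<in> set C \<and> arc s E l p y}"
proof (intro equalityI subsetI)
  fix e assume e: "e \<in> cycle_edges C"
  then obtain i where i: "i < length C" "e = {C ! i, C ! ((i + 1) mod length C)}"
    unfolding cycle_edges_def by blast
  moreover have "adj E (C ! i) (C ! ((i + 1) mod length C))"
    using C i unfolding is_cycle_def by blast
  moreover have "e \<subseteq> set C"
    using cycle_edges_subset[OF e] .
  ultimately show "e \<in> {{p, y} | p y. y \<in> set C \<and> arc s E l p y}"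
    using arc_or_arc_converse by (fastforce simp: insert_commute)
next
  fix e assume "e \<in> {{p, y} | p y. y \<in> set C \<and> arc s E l p y}"
  then obtain p y where "e = {p, y}" "y \<in> set C" "arc s E l p y" by blast
  then show "e \<in> cycle_edges C"
    using cycle_vertex_parent[OF C] arc_parent_unique by metis
qed

lemma cycle_edges_unique:
  assumes "connected_graph V E" "is_cycle V E C" "is_cycle V E C'"
  shows "cycle_edges C' = cycle_edges C"
proof -
  have "set C' = set C"
    using cycle_vertex_set_subset assms by (simp add: subset_antisym)
  then show ?thesis
    using cycle_edges_eq_parent_edges assms by simp
qed

lemma cycle_length_dvd:
  assumes C: "is_cycle V E C"
  shows "s dvd length C"
proof -
  define k where "k = length C"
  have "k > 0" using C unfolding is_cycle_def k_def by auto
  let ?h = "\<lambda>i. int (l (C ! i))"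
  consider "\<And>i. i < k \<Longrightarrow> arc s E l (C ! i) (C ! ((i + 1) mod k))"
    | "\<And>i. i < k \<Longrightarrow> arc s E l (C ! ((i + 1) mod k)) (C ! i)"
    using cycle_oriented[OF C] unfolding oriented_cycle_def k_def by blast
  then have "int s dvd int k * 1 \<or> int s dvd int k * -1"
  proof cases
    case 1
    then have "int s dvd ?h ((i + 1) mod k) - ?h i - 1" if "i < k" for i
      using that unfolding arc_def parent_label_iff_dvd by blast
    then show ?thesis using dvd_cyclic_increments[OF \<open>k > 0\<close>, of "int s" ?h 1] by blast
  next
    case 2
    then have "int s dvd - (?h i - ?h ((i + 1) mod k) - 1)" if "i < k" for i
      using that unfolding arc_def parent_label_iff_dvd dvd_minus_iff by blast
    then have "int s dvd ?h ((i + 1) mod k) - ?h i - (-1)" if "i < k" for i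
      using that by (simp add: algebra_simps)
    then show ?thesis using dvd_cyclic_increments[OF \<open>k > 0\<close>, of "int s" ?h "-1"] by blast
  qed
  then show ?thesis unfolding k_def by simp
qed

lemma path_leaving_cycle_oriented:
  assumes C: "is_cycle V E C" and ps: "is_path V E ps"
    and "hd ps \<in> set C" and off_cycle: "\<forall>x\<in>set (tl ps). x \<notin> set C"
  shows "i + 1 < length ps \<Longrightarrow> arc s E l (ps ! i) (ps ! (i + 1))"
proof (induction i)
  case 0
  have "ps \<noteq> []" and adj: "adj E (ps ! 0) (ps ! 1)"
    using ps 0 unfolding is_path_def by auto
  have "ps ! 1 \<notin> set C"
    using off_cycle 0 by (simp add: nth_tl[symmetric])
  moreover have "ps ! 0 \<in> set C"
    using \<open>hd ps \<in> set C\<close> \<open>ps \<noteq> []\<close> by (simp add: hd_conv_nth)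
  ultimately show ?case
    using arc_or_arc_converse[OF adj] cycle_contains_parent[OF C] by auto
next
  case (Suc i)
  have prev: "arc s E l (ps ! i) (ps ! Suc i)"
    using Suc by simp
  have adj: "adj E (ps ! Suc i) (ps ! (Suc i + 1))" and "ps ! (Suc i + 1) \<noteq> ps ! i"
    using ps Suc.prems unfolding is_path_def by (auto simp: nth_eq_iff_index_eq)
  then show ?case
    using arc_or_arc_converse[OF adj] arc_parent_unique[OF prev] by metis
qed

end

theorem lemma1:
  fixes V :: "'a set" and E :: "'a set set" and s :: nat and l :: "'a \<Rightarrow> nat"
  assumes "simple_graph V E"
    and "connected_graph V E"
    and "s \<ge> 3"
    and "cyclic_labeling s V E l"
  shows "(acyclic_graph V E \<or>
          (\<exists>C. is_cycle V E C \<and> (\<forall>C'. is_cycle V E C' \<longrightarrow> cycle_edges C' = cycle_edges C)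
               \<and> s dvd length C))
       \<and> (\<forall>C. is_cycle V E C \<longrightarrow>
            oriented_cycle s E l C \<and>
            (\<forall>ps. is_path V E ps \<and> hd ps \<in> set C \<and> (\<forall>x\<in>set (tl ps). x \<notin> set C) \<longrightarrow>
                  (\<forall>i. i + 1 < length ps \<longrightarrow> arc s E l (ps ! i) (ps ! (i + 1)))))"
proof -
  interpret cyclic_labeled_graph V E s l
    using assms(1,4) by unfold_locales
  have "acyclic_graph V E \<or>
          (\<exists>C. is_cycle V E C \<and> (\<forall>C'. is_cycle V E C' \<longrightarrow> cycle_edges C' = cycle_edges C)
               \<and> s dvd length C)"
  proof (cases "acyclic_graph V E")
    case False
    then obtain C where "is_cycle V E C"
      unfolding acyclic_graph_def by blast
    then show ?thesis
      using cycle_edges_unique[OF assms(2)] cycle_length_dvd by blast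
  qed simp
  moreover have "oriented_cycle s E l C \<and>
            (\<forall>ps. is_path V E ps \<and> hd ps \<in> set C \<and> (\<forall>x\<in>set (tl ps). x \<notin> set C) \<longrightarrow>
                  (\<forall>i. i + 1 < length ps \<longrightarrow> arc s E l (ps ! i) (ps ! (i + 1))))"
    if "is_cycle V E C" for C
    using cycle_oriented[OF that] path_leaving_cycle_oriented[OF that] by blast
  ultimately show ?thesis
    by blast
qed

end
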